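(* Let $n\ge2$, $a_1,\dots,a_n>0$, and let $\mathbf{A}$ be the $n\times n$ matrix whose first column has all entries equal to $-a_n$, whose superdiagonal entries are $A_{i,i+1}=a_i$ for $i\in\{1,\dots,n-1\}$, and all of whose other entries are $0$: $$\mathbf{A}=\begin{pmatrix}-a_n&a_1&0&\cdots&0\\-a_n&0&a_2&\ddots&\vdots\\\vdots&\vdots&\ddots&\ddots&0\\-a_n&0&\cdots&0&a_{n-1}\\-a_n&0&\cdots&0&0\end{pmatrix}.$$ Then the spectral radius satisfies $\rho(\mathbf{A})\le\max\{a_1,\dots,a_n\}$.
   Context: The spectral radius $\rho(\mathbf{A})$ is the maximum modulus of the complex eigenvalues of $\mathbf{A}$. *)

theory Defs
  imports "Jordan_Normal_Form.Spectral_Radius"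
begin

text \<open>The matrix A of the paper, with 0-based indexing: a 0, ..., a (n-1) stand for
  a_1, ..., a_n.\<close>
definition cycle_mat :: "nat \<Rightarrow> (nat \<Rightarrow> real) \<Rightarrow> complex mat" where
  "cycle_mat n a = mat n n (\<lambda>(i, j).
     if j = 0 then - complex_of_real (a (n - 1))
     else if j = i + 1 then complex_of_real (a i)
     else 0)"

end

theory Submission
  imports Defs
begin

(* Let l be an eigenvalue of A = cycle_mat n a with eigenvector f, and put
   c = a_(n-1) and M = max a_i (indices start at 0, as in cycle_mat).  The coordinate
   equations of A f = l f read
     l f_i = -c f_0 + a_i f_(i+1)  (i < n-1),     l f_(n-1) = -c f_0.
   If f_0 = 0 and l <> 0, back-substitution forces f = 0, which is impossible; the case
   l = 0 is harmless.  If f_0 <> 0, forward substitution (with P_k = a_0 ... a_(k-1)) yields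
   the characteristic equation
     l^n + sum_(j<n) b_j l^(n-1-j) = 0,    b_j = c P_j,
   whose coefficients satisfy 0 <= b_j, b_0 <= M and b_(j+1) <= M b_j.  After substituting
   w = l / M these are exactly the hypotheses of the Enestrom-Kakeya theorem (a real
   polynomial with coefficients 0 <= c_0 <= ... <= c_n, c_n > 0 has all its roots in the
   closed unit disc), hence |l| <= M. *)

lemma one_minus_mult_poly_sum:
  fixes c :: "nat \<Rightarrow> 'a::comm_ring_1" and w :: 'a
  shows "(1 - w) * (\<Sum>k\<le>n. c k * w ^ k)
    = c 0 + (\<Sum>k<n. (c (Suc k) - c k) * w ^ Suc k) - c n * w ^ Suc n"
  by (induction n) (simp_all add: algebra_simps)

(* Enestrom-Kakeya: if 0 <= c_0 <= c_1 <= ... <= c_n and c_n > 0, every complex root w of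
   sum_k c_k w^k satisfies |w| <= 1.  For |w| > 1 the identity above would give
   c_n |w|^(n+1) <= (c_0 + sum_k (c_(k+1) - c_k)) |w|^n = c_n |w|^n. *)
theorem enestrom_kakeya:
  fixes c :: "nat \<Rightarrow> real" and w :: complex
  assumes nonneg: "0 \<le> c 0"
    and mono: "\<And>k. k < n \<Longrightarrow> c k \<le> c (Suc k)"
    and lead: "0 < c n"
    and root: "(\<Sum>k\<le>n. of_real (c k) * w ^ k) = 0"
  shows "norm w \<le> 1"
proof (rule ccontr)
  assume "\<not> norm w \<le> 1"
  then have w_gt1: "1 < norm w" by simp
  have "of_real (c n) * w ^ Suc n
      = of_real (c 0) + (\<Sum>k<n. of_real (c (Suc k) - c k) * w ^ Suc k)"
    using one_minus_mult_poly_sum[where c = "\<lambda>k. of_real (c k)" and w = w and n = n] root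
    by simp
  then have "c n * norm w ^ Suc n
      = norm (of_real (c 0) + (\<Sum>k<n. of_real (c (Suc k) - c k) * w ^ Suc k))"
    using lead by (metis norm_mult norm_of_real norm_power abs_of_pos)
  also have "\<dots> \<le> c 0 + (\<Sum>k<n. (c (Suc k) - c k) * norm w ^ Suc k)"
    using nonneg mono
    by (intro order_trans[OF norm_triangle_ineq] add_mono order_trans[OF norm_sum] sum_mono)
       (auto simp: norm_mult norm_power simp del: of_real_diff)
  also have "\<dots> \<le> c 0 * norm w ^ n + (\<Sum>k<n. (c (Suc k) - c k) * norm w ^ n)"
    using nonneg mono w_gt1 one_le_power[of "norm w" n]
    by (intro add_mono sum_mono mult_left_mono power_increasing) (auto simp: mult_le_cancel_left1)
  also have "\<dots> = c n * norm w ^ n"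
    by (subst sum_distrib_right[symmetric]) (simp add: sum_lessThan_telescope algebra_simps)
  finally have "norm w * norm w ^ n \<le> norm w ^ n"
    using lead by simp
  moreover have "0 < norm w ^ n"
    using w_gt1 by (intro zero_less_power) linarith
  ultimately show False
    using w_gt1 by (simp add: mult_le_cancel_right2)
qed

(* The coefficients of the polynomial in w = l / M are
   c_k = b_(n-1-k) M^k (k < n) and c_n = M^n, which increase in k. *)
corollary monic_root_bound:
  fixes b :: "nat \<Rightarrow> real" and l :: complex and M :: real
  assumes M: "0 < M"
    and nonneg: "\<And>j. j < n \<Longrightarrow> 0 \<le> b j"
    and first: "b 0 \<le> M"
    and ratio: "\<And>j. Suc j < n \<Longrightarrow> b (Suc j) \<le> M * b j"
    and root: "l ^ n + (\<Sum>j<n. of_real (b j) * l ^ (n - Suc j)) = 0"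
  shows "norm l \<le> M"
proof -
  define c where "c k = (if k = n then 1 else b (n - Suc k)) * M ^ k" for k
  have scaled: "of_real (c k) * (l / of_real M) ^ k
      = (if k = n then 1 else of_real (b (n - Suc k))) * l ^ k" for k
    using M by (simp add: c_def power_divide)
  have "(\<Sum>k\<le>n. of_real (c k) * (l / of_real M) ^ k)
      = l ^ n + (\<Sum>k<n. of_real (b (n - Suc k)) * l ^ k)"
    unfolding scaled by (simp add: lessThan_Suc_atMost[symmetric])
  also have "\<dots> = 0"
    using root sum.nat_diff_reindex[where g = "\<lambda>j. of_real (b j) * l ^ (n - Suc j)" and n = n]
    by simp
  finally have root_w: "(\<Sum>k\<le>n. of_real (c k) * (l / of_real M) ^ k) = 0" .
  have mono: "c k \<le> c (Suc k)" if "k < n" for k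
  proof (cases "Suc k = n")
    case True
    then show ?thesis
      using M first by (simp add: c_def True[symmetric] mult_right_mono)
  next
    case False
    then have "b (n - Suc k) \<le> M * b (n - Suc (Suc k))"
      using ratio[of "n - Suc (Suc k)"] that by (simp add: Suc_diff_Suc)
    then show ?thesis
      using M that False by (simp add: c_def mult_right_mono mult.assoc[symmetric] mult.commute)
  qed
  have "norm (l / of_real M) \<le> 1"
    using M nonneg[of "n - 1"] mono root_w
    by (intro enestrom_kakeya[where c = c and n = n]) (auto simp: c_def)
  then show ?thesis
    using M by (simp add: norm_divide divide_le_eq)
qed

definition cycle_eigen_eqs :: "nat \<Rightarrow> (nat \<Rightarrow> real) \<Rightarrow> complex \<Rightarrow> (nat \<Rightarrow> complex) \<Rightarrow> bool"
  where "cycle_eigen_eqs n a l f \<longleftrightarrow> (\<forall>i<n. l * f i = - of_real (a (n - 1)) * f 0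
           + (if Suc i < n then of_real (a i) * f (Suc i) else 0))"

lemma cycle_mat_mult_vec:
  assumes v: "v \<in> carrier_vec n" and i: "i < n"
  shows "(cycle_mat n a *\<^sub>v v) $ i = - of_real (a (n - 1)) * v $ 0
     + (if Suc i < n then of_real (a i) * v $ Suc i else 0)"
proof -
  have "(cycle_mat n a *\<^sub>v v) $ i = (\<Sum>j<n. cycle_mat n a $$ (i, j) * v $ j)"
    using v i unfolding cycle_mat_def mult_mat_vec_def scalar_prod_def
    by (simp add: atLeast0LessThan)
  also have "\<dots> = (\<Sum>j<n. (if j = 0 then - of_real (a (n - 1)) * v $ 0 else 0)
      + (if j = Suc i then of_real (a i) * v $ Suc i else 0))"
    by (rule sum.cong) (auto simp: cycle_mat_def i)
  also have "\<dots> = - of_real (a (n - 1)) * v $ 0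
     + (if Suc i < n then of_real (a i) * v $ Suc i else 0)"
    using i by (simp add: sum.distrib)
  finally show ?thesis .
qed

lemma eigenvector_cycle_eigen_eqs:
  assumes "eigenvector (cycle_mat n a) v l"
  shows "cycle_eigen_eqs n a l (\<lambda>i. v $ i)"
proof -
  have v: "v \<in> carrier_vec n" and ev: "cycle_mat n a *\<^sub>v v = l \<cdot>\<^sub>v v"
    using assms unfolding eigenvector_def cycle_mat_def by auto
  have "l * v $ i = (cycle_mat n a *\<^sub>v v) $ i" if "i < n" for i
    using ev v that by simp
  then show ?thesis
    unfolding cycle_eigen_eqs_def using cycle_mat_mult_vec[OF v] by simp
qed

(* Back-substitution: for l <> 0 a solution with f_0 = 0 vanishes, from the last row
   (l f_(n-1) = 0) upwards (l f_i = a_i f_(i+1)). *)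
lemma cycle_eigen_eqs_back_substitution:
  assumes eqs: "cycle_eigen_eqs n a l f" and l: "l \<noteq> 0" and f0: "f 0 = 0" and i: "i < n"
  shows "f i = 0"
proof -
  have row: "l * f k = (if Suc k < n then of_real (a k) * f (Suc k) else 0)" if "k < n" for k
    using eqs that f0 unfolding cycle_eigen_eqs_def by simp
  from i have "i \<le> n - 1" by simp
  then show ?thesis
  proof (induction i rule: inc_induct)
    case base
    show ?case using row[of "n - 1"] i l by simp
  next
    case (step k)
    then have "Suc k < n" by simp
    with step row[of k] l show ?case by simp
  qed
qed

(* Forward substitution: with P_k = a_0 ... a_(k-1) and h_k = l^k + sum_(j<k) b_j l^(k-1-j),
   where b_j = a_(n-1) P_j, every solution satisfies P_k f_k = f_0 h_k; the last row then
   gives the characteristic equation f_0 h_n = 0. *)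
lemma cycle_eigen_eqs_char_eq:
  assumes eqs: "cycle_eigen_eqs n a l f" and n: "0 < n"
  shows "f 0 * (l ^ n + (\<Sum>j<n. of_real (a (n - 1) * (\<Prod>i<j. a i)) * l ^ (n - Suc j))) = 0"
proof -
  define P where "P k = (\<Prod>i<k. a i)" for k
  define b where "b j = a (n - 1) * P j" for j
  define h where "h k = l ^ k + (\<Sum>j<k. of_real (b j) * l ^ (k - Suc j))" for k
  have h_Suc: "h (Suc k) = l * h k + of_real (b k)" for k
  proof -
    have "l ^ (Suc k - Suc j) = l * l ^ (k - Suc j)" if "j < k" for j
      using that by (metis Suc_diff_Suc diff_Suc_Suc power_Suc)
    then have "(\<Sum>j<k. of_real (b j) * l ^ (Suc k - Suc j))
        = l * (\<Sum>j<k. of_real (b j) * l ^ (k - Suc j))"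
      by (simp add: sum_distrib_left algebra_simps)
    then show ?thesis by (simp add: h_def algebra_simps)
  qed
  have row: "l * f k = - of_real (a (n - 1)) * f 0
     + (if Suc k < n then of_real (a k) * f (Suc k) else 0)" if "k < n" for k
    using eqs that unfolding cycle_eigen_eqs_def by simp
  have invariant: "of_real (P k) * f k = f 0 * h k" if "k < n" for k
    using that
  proof (induction k)
    case 0
    then show ?case by (simp add: P_def h_def)
  next
    case (Suc k)
    have "of_real (P (Suc k)) * f (Suc k) = of_real (P k) * (of_real (a k) * f (Suc k))"
      by (simp add: P_def)
    also have "\<dots> = of_real (P k) * (l * f k + of_real (a (n - 1)) * f 0)"
      using row[of k] Suc.prems by simp
    also have "\<dots> = l * (of_real (P k) * f k) + f 0 * of_real (b k)"
      by (simp add: b_def algebra_simps)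
    also have "\<dots> = f 0 * h (Suc k)"
      using Suc by (simp add: h_Suc algebra_simps)
    finally show ?case .
  qed
  have "f 0 * h n = f 0 * (l * h (n - 1) + of_real (b (n - 1)))"
    using n h_Suc[of "n - 1"] by simp
  also have "\<dots> = of_real (P (n - 1)) * (l * f (n - 1) + of_real (a (n - 1)) * f 0)"
    using invariant[of "n - 1"] n by (simp add: b_def algebra_simps)
  also have "\<dots> = 0"
    using row[of "n - 1"] n by simp
  finally show ?thesis
    by (simp add: h_def b_def P_def)
qed

(* Every eigenvalue l of cycle_mat n a with 0 <= a_i <= M satisfies |l| <= M: a nonzero
   eigenvalue has an eigenvector with f_0 <> 0 by back-substitution, so l is a root of the
   characteristic equation, whose coefficients b_j = a_(n-1) P_j obey b_(j+1) = a_j b_j. *)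
lemma cycle_mat_eigenvalue_bound:
  assumes n: "0 < n" and M: "0 < M"
    and a: "\<And>i. i < n \<Longrightarrow> 0 \<le> a i \<and> a i \<le> M"
    and l: "eigenvalue (cycle_mat n a) l"
  shows "norm l \<le> M"
proof (cases "l = 0")
  case True
  then show ?thesis using M by simp
next
  case False
  from l obtain v where ev: "eigenvector (cycle_mat n a) v l"
    unfolding eigenvalue_def by blast
  then have v: "v \<in> carrier_vec n" "v \<noteq> 0\<^sub>v n"
    unfolding eigenvector_def cycle_mat_def by auto
  have eqs: "cycle_eigen_eqs n a l (\<lambda>i. v $ i)"
    using eigenvector_cycle_eigen_eqs[OF ev] .
  have "v $ 0 \<noteq> 0"
  proof
    assume "v $ 0 = 0"
    then have "v $ i = 0" if "i < n" for i
      using cycle_eigen_eqs_back_substitution[OF eqs False _ that] by simp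
    then have "v = 0\<^sub>v n"
      using v(1) by (intro eq_vecI) auto
    with v(2) show False ..
  qed
  then have root: "l ^ n + (\<Sum>j<n. of_real (a (n - 1) * (\<Prod>i<j. a i)) * l ^ (n - Suc j)) = 0"
    using cycle_eigen_eqs_char_eq[OF eqs n] by simp
  have coeff_nonneg: "0 \<le> a (n - 1) * (\<Prod>i<j. a i)" if "j < n" for j
    using a n that by (intro mult_nonneg_nonneg prod_nonneg) auto
  show ?thesis
  proof (rule monic_root_bound[OF M coeff_nonneg _ _ root])
    show "a (n - 1) * (\<Prod>i<0. a i) \<le> M"
      using a[of "n - 1"] n by simp
    show "a (n - 1) * (\<Prod>i<Suc j. a i) \<le> M * (a (n - 1) * (\<Prod>i<j. a i))"
      if "Suc j < n" for j
      using mult_left_mono[OF conjunct2[OF a[of j]] coeff_nonneg[of j]] that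
      by (simp add: algebra_simps)
  qed
qed

(* The spectral radius is attained at some eigenvalue, which the previous lemma bounds. *)
theorem mainTheorem11:
  fixes n :: nat and a :: "nat \<Rightarrow> real"
  assumes "n \<ge> 2"
    and "\<And>i. i < n \<Longrightarrow> a i > 0"
  shows "spectral_radius (cycle_mat n a) \<le> Max (a ` {..<n})"
proof -
  define M where "M = Max (a ` {..<n})"
  have n: "0 < n" using assms(1) by simp
  have a: "0 \<le> a i \<and> a i \<le> M" if "i < n" for i
    using assms(2)[OF that] that unfolding M_def by auto
  have M: "0 < M"
    using assms(2)[OF n] a[OF n] by linarith
  have "cycle_mat n a \<in> carrier_mat n n"
    unfolding cycle_mat_def by simp
  from spectral_radius_mem_max(1)[OF this n] obtain l
    where "l \<in> spectrum (cycle_mat n a)" and rho: "spectral_radius (cycle_mat n a) = norm l"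
    by auto
  then have "eigenvalue (cycle_mat n a) l"
    unfolding spectrum_def by simp
  with n M a have "norm l \<le> M"
    by (rule cycle_mat_eigenvalue_bound)
  then show ?thesis
    unfolding rho M_def .
qed

end
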